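(* Every connected infinite graph $G$ with uniformly bounded vertex degrees and finite asymptotic dimension is weighted hyperfinite.
   Context: A graph $G$ has asymptotic dimension at most $d$ (finite $d$) if for every $r>0$ there is $R=R(r)$ and vertex-disjoint induced subgraphs $\mathcal U_1,\dots,\mathcal U_d$ of $G$ covering $V(G)$ such that for each $i$, each connected component of $\mathcal U_i$ has diameter at most $R$ and any two distinct components of $\mathcal U_i$ are at distance at least $r$ in $G$. A connected infinite bounded-degree graph $G$ is weighted hyperfinite if for every $\epsilon>0$ there is $K_\epsilon>0$ such that for every finite induced subgraph $L\subseteq G$ and every $w:V(L)\to[0,\infty)$ there is $M\subseteq V(L)$ with $\sum_{x\in M}w(x)\le\epsilon\sum_{x\in V(L)}w(x)$ such that every connected component of $L$ with $M$ deleted has at most $K_\epsilon$ vertices. *)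

theory Defs
  imports Main "HOL-Library.Extended_Nat"
begin

definition graph :: "'a set \<Rightarrow> ('a \<Rightarrow> 'a \<Rightarrow> bool) \<Rightarrow> bool" where
  "graph V E \<longleftrightarrow> (\<forall>x y. E x y \<longrightarrow> x \<in> V \<and> y \<in> V \<and> E y x \<and> x \<noteq> y)"

definition walk_in :: "('a \<Rightarrow> 'a \<Rightarrow> bool) \<Rightarrow> 'a set \<Rightarrow> 'a list \<Rightarrow> bool" where
  "walk_in E S xs \<longleftrightarrow> xs \<noteq> [] \<and> set xs \<subseteq> S \<and>
     (\<forall>i. Suc i < length xs \<longrightarrow> E (xs ! i) (xs ! Suc i))"

definition reach_in :: "('a \<Rightarrow> 'a \<Rightarrow> bool) \<Rightarrow> 'a set \<Rightarrow> 'a \<Rightarrow> 'a \<Rightarrow> bool" where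
  "reach_in E S x y \<longleftrightarrow> (\<exists>xs. walk_in E S xs \<and> hd xs = x \<and> last xs = y)"

text \<open>Graph distance in (V,E): least number of edges of a walk, infinity if none.\<close>
definition gdist :: "'a set \<Rightarrow> ('a \<Rightarrow> 'a \<Rightarrow> bool) \<Rightarrow> 'a \<Rightarrow> 'a \<Rightarrow> enat" where
  "gdist V E x y = (INF n \<in> {n. \<exists>xs. walk_in E V xs \<and> hd xs = x \<and> last xs = y
                                       \<and> length xs = Suc n}. enat n)"

definition components :: "('a \<Rightarrow> 'a \<Rightarrow> bool) \<Rightarrow> 'a set \<Rightarrow> 'a set set" where
  "components E S = {{y. reach_in E S x y} | x. x \<in> S}"

definition connected_graph :: "'a set \<Rightarrow> ('a \<Rightarrow> 'a \<Rightarrow> bool) \<Rightarrow> bool" where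
  "connected_graph V E \<longleftrightarrow> (\<forall>x\<in>V. \<forall>y\<in>V. reach_in E V x y)"

definition bounded_degree :: "'a set \<Rightarrow> ('a \<Rightarrow> 'a \<Rightarrow> bool) \<Rightarrow> bool" where
  "bounded_degree V E \<longleftrightarrow>
     (\<exists>D::nat. \<forall>x\<in>V. finite {y. E x y} \<and> card {y. E x y} \<le> D)"

text \<open>Asymptotic dimension at most d (as in the paper: d parts U_0..U_(d-1)).
  Diameters and distances are measured in G.\<close>
definition asdim_le :: "'a set \<Rightarrow> ('a \<Rightarrow> 'a \<Rightarrow> bool) \<Rightarrow> nat \<Rightarrow> bool" where
  "asdim_le V E d \<longleftrightarrow>
     (\<forall>r::nat. r > 0 \<longrightarrow> (\<exists>R::nat. \<exists>U :: nat \<Rightarrow> 'a set.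
        (\<forall>i<d. U i \<subseteq> V) \<and> (\<Union>i<d. U i) = V \<and>
        (\<forall>i<d. \<forall>j<d. i \<noteq> j \<longrightarrow> U i \<inter> U j = {}) \<and>
        (\<forall>i<d. \<forall>C\<in>components E (U i). \<forall>x\<in>C. \<forall>y\<in>C. gdist V E x y \<le> enat R) \<and>
        (\<forall>i<d. \<forall>C1\<in>components E (U i). \<forall>C2\<in>components E (U i). C1 \<noteq> C2 \<longrightarrow>
            (\<forall>x\<in>C1. \<forall>y\<in>C2. gdist V E x y \<ge> enat r))))"

definition finite_asdim :: "'a set \<Rightarrow> ('a \<Rightarrow> 'a \<Rightarrow> bool) \<Rightarrow> bool" where
  "finite_asdim V E \<longleftrightarrow> (\<exists>d. asdim_le V E d)"

definition weighted_hyperfinite :: "'a set \<Rightarrow> ('a \<Rightarrow> 'a \<Rightarrow> bool) \<Rightarrow> bool" where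
  "weighted_hyperfinite V E \<longleftrightarrow>
     (\<forall>\<epsilon>::real. \<epsilon> > 0 \<longrightarrow> (\<exists>K::real. K > 0 \<and>
        (\<forall>L w. finite L \<and> L \<subseteq> V \<and> (\<forall>x\<in>L. w x \<ge> (0::real)) \<longrightarrow>
           (\<exists>M \<subseteq> L. (\<Sum>x\<in>M. w x) \<le> \<epsilon> * (\<Sum>x\<in>L. w x) \<and>
              (\<forall>C\<in>components E (L - M). real (card C) \<le> K)))))"

end

theory Submission
  imports Defs
begin

(* Given \<epsilon>, choose m with d < \<epsilon> m and a cover of V by d sets U_i whose components have
   diameter at most R and are at least 2m apart.  For each i the spheres
   {y. dist(y, U_i) = t}, t = 1..m, are disjoint, so one of them carries at most a 1/m share of
   the weight of L; deleting these d spheres costs less than an \<epsilon> share.  A remaining component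
   that starts in a component D of U_i cannot cross the chosen sphere of radius t, and since the
   other components of U_i are 2t away, it stays within distance t of D, hence inside a ball of
   radius R + m, whose size is bounded in terms of the maximum degree. *)

lemma walk_in_iff_relpowp:
  "(\<exists>xs. walk_in E S xs \<and> hd xs = x \<and> last xs = y \<and> length xs = Suc n) \<longleftrightarrow>
     x \<in> S \<and> ((\<lambda>a b. E a b \<and> b \<in> S) ^^ n) x y"
proof
  assume "\<exists>xs. walk_in E S xs \<and> hd xs = x \<and> last xs = y \<and> length xs = Suc n"
  then obtain xs where xs: "walk_in E S xs" "hd xs = x" "last xs = y" "length xs = Suc n"
    by blast
  have "xs ! 0 = x" "xs ! n = y"
    using xs by (auto simp: hd_conv_nth last_conv_nth walk_in_def)
  moreover have "E (xs ! i) (xs ! Suc i) \<and> xs ! Suc i \<in> S" if "i < n" for i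
    using xs that unfolding walk_in_def by (metis Suc_mono nth_mem subsetD)
  moreover have "x \<in> S"
    using xs unfolding walk_in_def by auto
  ultimately show "x \<in> S \<and> ((\<lambda>a b. E a b \<and> b \<in> S) ^^ n) x y"
    unfolding relpowp_fun_conv by blast
next
  assume "x \<in> S \<and> ((\<lambda>a b. E a b \<and> b \<in> S) ^^ n) x y"
  then obtain f where f: "x \<in> S" "f 0 = x" "f n = y"
    "\<And>i. i < n \<Longrightarrow> E (f i) (f (Suc i)) \<and> f (Suc i) \<in> S"
    unfolding relpowp_fun_conv by blast
  have "f i \<in> S" if "i \<le> n" for i
    using f that by (cases i) auto
  then have "walk_in E S (map f [0..<Suc n])"
    using f(4) unfolding walk_in_def by (auto simp del: upt_Suc)
  then show "\<exists>xs. walk_in E S xs \<and> hd xs = x \<and> last xs = y \<and> length xs = Suc n"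
    using f by (intro exI[of _ "map f [0..<Suc n]"]) (simp add: hd_map last_map del: upt_Suc)
qed

lemma reach_in_iff_rtranclp:
  "reach_in E S x y \<longleftrightarrow> x \<in> S \<and> (\<lambda>a b. E a b \<and> b \<in> S)\<^sup>*\<^sup>* x y"
proof -
  have "reach_in E S x y \<longleftrightarrow>
      (\<exists>n xs. walk_in E S xs \<and> hd xs = x \<and> last xs = y \<and> length xs = Suc n)"
    unfolding reach_in_def walk_in_def by (metis length_greater_0_conv Suc_pred)
  then show ?thesis
    unfolding walk_in_iff_relpowp rtranclp_power by blast
qed

lemma reach_in_closed:
  assumes "reach_in E S x y" and "x \<in> B"
    and closed: "\<And>a b. a \<in> B \<Longrightarrow> E a b \<Longrightarrow> b \<in> S \<Longrightarrow> b \<in> B"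
  shows "y \<in> B"
proof -
  have "(\<lambda>a b. E a b \<and> b \<in> S)\<^sup>*\<^sup>* x y"
    using assms(1) unfolding reach_in_iff_rtranclp by blast
  then show ?thesis
    by (induction rule: rtranclp_induct) (use assms(2) closed in auto)
qed

lemma reach_in_refl: "x \<in> S \<Longrightarrow> reach_in E S x x"
  unfolding reach_in_iff_rtranclp by simp

lemma reach_in_in:
  assumes "reach_in E S x y"
  shows "x \<in> S \<and> y \<in> S"
proof
  show "x \<in> S"
    using assms unfolding reach_in_iff_rtranclp by blast
  then show "y \<in> S"
    using reach_in_closed[OF assms] by blast
qed

lemma finite_card_relpowp_ball:
  fixes E :: "'a \<Rightarrow> 'a \<Rightarrow> bool" and x :: 'a
  assumes "\<And>v. finite {y. E v y}" and "\<And>v. card {y. E v y} \<le> D"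
  shows "finite {y. \<exists>k\<le>n. (E ^^ k) x y} \<and> card {y. \<exists>k\<le>n. (E ^^ k) x y} \<le> (D + 1) ^ n"
proof (induction n)
  case 0
  have "{y. \<exists>k\<le>0. (E ^^ k) x y} = {x}"
    by auto
  then show ?case
    by simp
next
  case (Suc n)
  let ?B = "{y. \<exists>k\<le>n. (E ^^ k) x y}"
  let ?N = "\<Union>z\<in>?B. {y. E z y}"
  have step: "{y. \<exists>k\<le>Suc n. (E ^^ k) x y} \<subseteq> ?B \<union> ?N"
    by (auto simp: le_Suc_eq elim!: relpowp_Suc_E)
  have "card ?N \<le> (\<Sum>z\<in>?B. card {y. E z y})"
    using Suc.IH by (intro card_UN_le) simp
  also have "\<dots> \<le> card ?B * D"
    using sum_mono[of ?B "\<lambda>z. card {y. E z y}" "\<lambda>_. D"] assms(2) by simp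
  finally have "card (?B \<union> ?N) \<le> card ?B * (D + 1)"
    using card_Un_le[of ?B ?N] by simp
  also have "\<dots> \<le> (D + 1) ^ Suc n"
    using Suc.IH by (simp only: power_Suc mult.commute[of "D + 1"] mult_le_mono1)
  finally show ?case
    using Suc.IH assms(1) step by (meson card_mono finite_UN_I finite_UnI finite_subset order_trans)
qed

lemma sum_UN_le_sum:
  fixes w :: "'b \<Rightarrow> real"
  assumes "finite I" and "\<And>i. i \<in> I \<Longrightarrow> finite (A i)"
    and "\<And>x. x \<in> (\<Union>i\<in>I. A i) \<Longrightarrow> 0 \<le> w x"
  shows "sum w (\<Union>i\<in>I. A i) \<le> (\<Sum>i\<in>I. sum w (A i))"
  using assms
proof (induction I rule: finite_induct)
  case (insert j I)
  have "0 \<le> sum w (A j \<inter> (\<Union>i\<in>I. A i))"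
    using insert.prems(2) by (intro sum_nonneg) auto
  then have "sum w (A j \<union> (\<Union>i\<in>I. A i)) \<le> sum w (A j) + sum w (\<Union>i\<in>I. A i)"
    using sum_Un[of "A j" "\<Union>i\<in>I. A i" w] insert.prems(1) insert.hyps(1) by simp
  also have "\<dots> \<le> sum w (A j) + (\<Sum>i\<in>I. sum w (A i))"
    using insert by simp
  finally show ?case
    using insert.hyps by simp
qed simp

lemma disjoint_family_light_member:
  fixes w :: "'b \<Rightarrow> real" and m :: nat
  assumes "finite L" and "\<And>x. x \<in> L \<Longrightarrow> 0 \<le> w x" and "0 < m"
    and "\<And>s t. s \<noteq> t \<Longrightarrow> A s \<inter> A t = {}"
  obtains t where "t \<in> {1..m}" and "sum w (L \<inter> A t) \<le> sum w L / m"
proof -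
  have "\<exists>t\<in>{1..m}. sum w (L \<inter> A t) \<le> sum w L / m"
  proof (rule ccontr)
    assume "\<not> ?thesis"
    then have heavy: "sum w L / m < sum w (L \<inter> A t)" if "t \<in> {1..m}" for t
      using that by force
    have "sum w L = (\<Sum>t\<in>{1..m}. sum w L / m)"
      using assms(3) by simp
    also have "\<dots> < (\<Sum>t\<in>{1..m}. sum w (L \<inter> A t))"
      using heavy assms(3) by (intro sum_strict_mono) auto
    also have "\<dots> = sum w (\<Union>t\<in>{1..m}. L \<inter> A t)"
      using assms(1,4) by (intro sum.UNION_disjoint[symmetric]) auto
    also have "\<dots> \<le> sum w L"
      using assms(1,2) by (intro sum_mono2) auto
    finally show False
      by simp
  qed
  then show thesis
    using that by blast
qed

lemma light_choice_from_disjoint_families: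
  fixes w :: "'b \<Rightarrow> real" and m d :: nat
  assumes "finite L" and "\<And>x. x \<in> L \<Longrightarrow> 0 \<le> w x" and "0 < m"
    and "\<And>i s t. s \<noteq> t \<Longrightarrow> A i s \<inter> A i t = {}"
  obtains T where "\<And>i. T i \<in> {1..m}"
    and "sum w (L \<inter> (\<Union>i<d. A i (T i))) \<le> d * sum w L / m"
proof -
  have "\<exists>t. t \<in> {1..m} \<and> sum w (L \<inter> A i t) \<le> sum w L / m" for i
    by (rule disjoint_family_light_member[OF assms(1-3), where A = "A i"]) (use assms(4) in blast)+
  then have "\<exists>T. \<forall>i. T i \<in> {1..m} \<and> sum w (L \<inter> A i (T i)) \<le> sum w L / m"
    by (intro choice allI)
  then obtain T where T: "\<And>i. T i \<in> {1..m}" "\<And>i. sum w (L \<inter> A i (T i)) \<le> sum w L / m"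
    by blast
  have "sum w (L \<inter> (\<Union>i<d. A i (T i))) = sum w (\<Union>i<d. L \<inter> A i (T i))"
    by (simp only: Int_UN_distrib)
  also have "\<dots> \<le> (\<Sum>i<d. sum w (L \<inter> A i (T i)))"
    using assms(1,2) by (intro sum_UN_le_sum) auto
  also have "\<dots> \<le> d * sum w L / m"
    using sum_mono[of "{..<d}", OF T(2)] by simp
  finally show thesis
    by (rule that[OF T(1)])
qed

locale connected_sgraph =
  fixes V :: "'a set" and E :: "'a \<Rightarrow> 'a \<Rightarrow> bool"
  assumes graph: "graph V E" and connected: "connected_graph V E"
begin

lemma edge_in_V: "E x y \<Longrightarrow> x \<in> V \<and> y \<in> V"
  using graph unfolding graph_def by blast

lemma edge_sym: "E x y \<Longrightarrow> E y x"
  using graph unfolding graph_def by blast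

lemma relpowp_sym: "(E ^^ n) x y \<Longrightarrow> (E ^^ n) y x"
proof (induction n arbitrary: x)
  case (Suc n)
  from Suc.prems obtain z where "E x z" "(E ^^ n) z y"
    by (rule relpowp_Suc_E2)
  then show ?case
    using Suc.IH edge_sym relpowp_Suc_I by metis
qed simp

lemma edges_within_V: "(\<lambda>a b. E a b \<and> b \<in> V) = E"
  using edge_in_V by blast

lemma walk_in_V_iff_relpowp:
  "(\<exists>xs. walk_in E V xs \<and> hd xs = x \<and> last xs = y \<and> length xs = Suc n) \<longleftrightarrow>
     x \<in> V \<and> (E ^^ n) x y"
  using walk_in_iff_relpowp[of E V x y n] by (simp only: edges_within_V)

lemma relpowp_exists: "x \<in> V \<Longrightarrow> y \<in> V \<Longrightarrow> \<exists>n. (E ^^ n) x y"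
  using connected unfolding connected_graph_def reach_in_iff_rtranclp edges_within_V rtranclp_power
  by blast

definition hop_dist :: "'a \<Rightarrow> 'a \<Rightarrow> nat" where
  "hop_dist x y = (LEAST n. (E ^^ n) x y)"

lemma relpowp_hop_dist: "x \<in> V \<Longrightarrow> y \<in> V \<Longrightarrow> (E ^^ hop_dist x y) x y"
  unfolding hop_dist_def using relpowp_exists by (metis LeastI)

lemma hop_dist_le: "(E ^^ n) x y \<Longrightarrow> hop_dist x y \<le> n"
  unfolding hop_dist_def by (rule Least_le)

lemma hop_dist_self [simp]: "hop_dist x x = 0"
  using hop_dist_le[of 0 x x] by simp

lemma hop_dist_triangle:
  "x \<in> V \<Longrightarrow> y \<in> V \<Longrightarrow> z \<in> V \<Longrightarrow> hop_dist x z \<le> hop_dist x y + hop_dist y z"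
  by (meson hop_dist_le relpowp_hop_dist relpowp_trans)

lemma hop_dist_commute: "x \<in> V \<Longrightarrow> y \<in> V \<Longrightarrow> hop_dist x y = hop_dist y x"
  by (meson antisym hop_dist_le relpowp_hop_dist relpowp_sym)

lemma hop_dist_edge: "x \<in> V \<Longrightarrow> E y z \<Longrightarrow> hop_dist x z \<le> Suc (hop_dist x y)"
  by (meson edge_in_V hop_dist_le relpowp_Suc_I relpowp_hop_dist)

lemma gdist_eq_hop_dist: "x \<in> V \<Longrightarrow> y \<in> V \<Longrightarrow> gdist V E x y = enat (hop_dist x y)"
  unfolding gdist_def walk_in_V_iff_relpowp
  by (rule antisym) (auto intro!: INF_lower INF_greatest relpowp_hop_dist hop_dist_le)

lemma finite_card_hop_ball:
  assumes "x \<in> V" and deg: "\<forall>v\<in>V. finite {y. E v y} \<and> card {y. E v y} \<le> D"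
  shows "finite {y \<in> V. hop_dist x y \<le> n} \<and> card {y \<in> V. hop_dist x y \<le> n} \<le> (D + 1) ^ n"
proof -
  let ?B = "{y. \<exists>k\<le>n. (E ^^ k) x y}"
  have "{y. E v y} = {}" if "v \<notin> V" for v
    using that edge_in_V by blast
  then have "finite {y. E v y} \<and> card {y. E v y} \<le> D" for v
    using deg by (cases "v \<in> V") auto
  then have ball: "finite ?B \<and> card ?B \<le> (D + 1) ^ n"
    by (intro finite_card_relpowp_ball) auto
  have "{y \<in> V. hop_dist x y \<le> n} \<subseteq> ?B"
    using relpowp_hop_dist[OF assms(1)] by blast
  with ball show ?thesis
    by (meson card_mono finite_subset le_trans)
qed

definition set_sphere :: "'a set \<Rightarrow> nat \<Rightarrow> 'a set" where
  "set_sphere U t = {y \<in> V. (\<exists>u\<in>U. hop_dist u y = t) \<and> (\<forall>u\<in>U. t \<le> hop_dist u y)}"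

definition thickening :: "'a set \<Rightarrow> nat \<Rightarrow> 'a set" where
  "thickening D t = {y \<in> V. \<exists>u\<in>D. hop_dist u y < t}"

lemma set_sphere_disjoint: "s \<noteq> t \<Longrightarrow> set_sphere U s \<inter> set_sphere U t = {}"
  unfolding set_sphere_def by force

lemma thickening_boundary_subset_set_sphere:
  assumes "U \<subseteq> V" and "D \<subseteq> U"
    and far: "\<And>u u'. u \<in> D \<Longrightarrow> u' \<in> U - D \<Longrightarrow> 2 * t \<le> hop_dist u u'"
    and z: "z \<in> thickening D t" and "E z y" and y: "y \<notin> thickening D t"
  shows "y \<in> set_sphere U t"
proof -
  obtain u where u: "u \<in> D" "hop_dist u z < t"
    using z unfolding thickening_def by blast
  have "u \<in> V" "y \<in> V"
    using u(1) assms(1,2) edge_in_V[OF \<open>E z y\<close>] by auto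
  have near: "t \<le> hop_dist v y" if "v \<in> D" for v
    using y that \<open>y \<in> V\<close> unfolding thickening_def by force
  have "hop_dist u y \<le> Suc (hop_dist u z)"
    using hop_dist_edge[OF \<open>u \<in> V\<close> \<open>E z y\<close>] .
  with u near have "hop_dist u y = t"
    by (meson Suc_leI le_antisym le_trans)
  moreover have "t \<le> hop_dist v y" if "v \<in> U" for v
  proof (cases "v \<in> D")
    case False
    with that have "2 * t \<le> hop_dist u v"
      using far u(1) by blast
    also have "\<dots> \<le> hop_dist u y + hop_dist v y"
      using hop_dist_triangle hop_dist_commute \<open>u \<in> V\<close> \<open>y \<in> V\<close> that assms(1) by (metis subsetD)
    finally show ?thesis
      using \<open>hop_dist u y = t\<close> by simp
  qed (rule near)
  ultimately show ?thesis
    using u(1) assms(2) \<open>y \<in> V\<close> unfolding set_sphere_def by blast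
qed

lemma reach_in_subset_thickening:
  assumes "U \<subseteq> V" and "D \<subseteq> U"
    and far: "\<And>u u'. u \<in> D \<Longrightarrow> u' \<in> U - D \<Longrightarrow> 2 * t \<le> hop_dist u u'"
    and "x \<in> D" and "0 < t" and cut: "L \<inter> set_sphere U t \<subseteq> M"
    and "reach_in E (L - M) x y"
  shows "y \<in> thickening D t"
  using \<open>reach_in E (L - M) x y\<close>
proof (rule reach_in_closed)
  show "x \<in> thickening D t"
    using assms(1,2,4,5) unfolding thickening_def by force
  fix a b
  assume "a \<in> thickening D t" "E a b" "b \<in> L - M"
  then show "b \<in> thickening D t"
    using thickening_boundary_subset_set_sphere[OF assms(1,2) far] cut by blast
qed

lemma component_in_hop_ball:
  assumes "U \<subseteq> V" and "x \<in> U" and "0 < t"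
    and diam: "\<And>u. reach_in E U x u \<Longrightarrow> hop_dist x u \<le> R"
    and sep: "\<And>u u'. reach_in E U x u \<Longrightarrow> u' \<in> U \<Longrightarrow> \<not> reach_in E U x u' \<Longrightarrow>
      2 * t \<le> hop_dist u u'"
    and "L \<inter> set_sphere U t \<subseteq> M" and "reach_in E (L - M) x y"
  shows "hop_dist x y \<le> R + t"
proof -
  let ?D = "{u. reach_in E U x u}"
  have "?D \<subseteq> U"
    using reach_in_in by fast
  have "y \<in> thickening ?D t"
    using assms(1,3,6,7) sep \<open>?D \<subseteq> U\<close> reach_in_refl[OF \<open>x \<in> U\<close>]
    by (intro reach_in_subset_thickening[of U ?D t x L M]) auto
  then obtain u where "reach_in E U x u" "hop_dist u y < t" "y \<in> V"
    unfolding thickening_def by blast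
  moreover have "x \<in> V" "u \<in> V"
    using assms(1,2) \<open>?D \<subseteq> U\<close> \<open>reach_in E U x u\<close> by auto
  ultimately show ?thesis
    using diam hop_dist_triangle[of x u y] by fastforce
qed

(* The witness of asdim_le at scale r, phrased with hop_dist and reach_in. *)
definition asdim_cover :: "nat \<Rightarrow> nat \<Rightarrow> nat \<Rightarrow> (nat \<Rightarrow> 'a set) \<Rightarrow> bool" where
  "asdim_cover d r R U \<longleftrightarrow> (\<forall>i<d. U i \<subseteq> V) \<and> V \<subseteq> (\<Union>i<d. U i) \<and>
     (\<forall>i<d. \<forall>x u. reach_in E (U i) x u \<longrightarrow> hop_dist x u \<le> R) \<and>
     (\<forall>i<d. \<forall>x u u'. reach_in E (U i) x u \<longrightarrow> u' \<in> U i \<longrightarrow> \<not> reach_in E (U i) x u' \<longrightarrow>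
        r \<le> hop_dist u u')"

lemma asdim_le_imp_asdim_cover:
  assumes "asdim_le V E d" and "0 < r"
  shows "\<exists>R U. asdim_cover d r R U"
proof -
  obtain R U where UV: "\<forall>i<d. U i \<subseteq> V" and cover: "(\<Union>i<d. U i) = V"
    and diam: "\<forall>i<d. \<forall>C\<in>components E (U i). \<forall>x\<in>C. \<forall>y\<in>C. gdist V E x y \<le> enat R"
    and sep: "\<forall>i<d. \<forall>C1\<in>components E (U i). \<forall>C2\<in>components E (U i). C1 \<noteq> C2 \<longrightarrow>
      (\<forall>x\<in>C1. \<forall>y\<in>C2. enat r \<le> gdist V E x y)"
    using assms(1)[unfolded asdim_le_def, rule_format, OF assms(2)] by (elim exE conjE) (rule that)
  have comp: "{v. reach_in E (U i) x v} \<in> components E (U i)" if "x \<in> U i" for i x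
    using that unfolding components_def by blast
  have diam': "hop_dist x u \<le> R" if "i < d" "reach_in E (U i) x u" for i x u
  proof -
    have "x \<in> U i" "u \<in> U i"
      using reach_in_in[OF that(2)] by auto
    then have "x \<in> V" "u \<in> V"
      using UV that(1) by auto
    have "gdist V E x u \<le> enat R"
      by (rule diam[rule_format, OF that(1) comp[OF \<open>x \<in> U i\<close>]])
        (simp_all add: reach_in_refl[OF \<open>x \<in> U i\<close>] that(2))
    then show ?thesis
      by (simp add: gdist_eq_hop_dist[OF \<open>x \<in> V\<close> \<open>u \<in> V\<close>])
  qed
  have sep': "r \<le> hop_dist u u'"
    if "i < d" "reach_in E (U i) x u" "u' \<in> U i" "\<not> reach_in E (U i) x u'" for i x u u'
  proof -
    have "x \<in> U i" "u \<in> U i"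
      using reach_in_in[OF that(2)] by auto
    then have "u \<in> V" "u' \<in> V"
      using UV that(1,3) by auto
    have "{v. reach_in E (U i) x v} \<noteq> {v. reach_in E (U i) u' v}"
      using that(3,4) reach_in_refl[of u' "U i" E] by blast
    then have "enat r \<le> gdist V E u u'"
      by (rule sep[rule_format, OF that(1) comp[OF \<open>x \<in> U i\<close>] comp[OF that(3)]])
        (simp_all add: reach_in_refl[OF that(3)] that(2))
    then show ?thesis
      by (simp add: gdist_eq_hop_dist[OF \<open>u \<in> V\<close> \<open>u' \<in> V\<close>])
  qed
  have "asdim_cover d r R U"
    unfolding asdim_cover_def using UV cover diam' sep' by blast
  then show ?thesis
    by blast
qed

lemma card_component_after_cut:
  assumes cover: "asdim_cover d (2 * m) R U"
    and deg: "\<forall>v\<in>V. finite {y. E v y} \<and> card {y. E v y} \<le> \<Delta>"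
    and T: "\<And>i. T i \<in> {1..m}" and "L \<subseteq> V"
    and cut: "L \<inter> (\<Union>i<d. set_sphere (U i) (T i)) \<subseteq> M"
    and "C \<in> components E (L - M)"
  shows "card C \<le> (\<Delta> + 1) ^ (R + m)"
proof -
  from cover have UV: "\<And>i. i < d \<Longrightarrow> U i \<subseteq> V" and covers: "V \<subseteq> (\<Union>i<d. U i)"
    and diam: "\<And>i x u. i < d \<Longrightarrow> reach_in E (U i) x u \<Longrightarrow> hop_dist x u \<le> R"
    and sep: "\<And>i x u u'. i < d \<Longrightarrow> reach_in E (U i) x u \<Longrightarrow> u' \<in> U i \<Longrightarrow>
      \<not> reach_in E (U i) x u' \<Longrightarrow> 2 * m \<le> hop_dist u u'"
    unfolding asdim_cover_def by auto
  obtain x where "x \<in> L - M" and C: "C = {y. reach_in E (L - M) x y}"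
    using \<open>C \<in> components E (L - M)\<close> unfolding components_def by blast
  then have "x \<in> V"
    using \<open>L \<subseteq> V\<close> by blast
  then obtain i where "i < d" "x \<in> U i"
    using covers by blast
  have "2 * T i \<le> 2 * m"
    using T[of i] by simp
  then have sep_i: "2 * T i \<le> hop_dist u u'"
    if "reach_in E (U i) x u" "u' \<in> U i" "\<not> reach_in E (U i) x u'" for u u'
    using sep[OF \<open>i < d\<close> that] by linarith
  have cut_i: "L \<inter> set_sphere (U i) (T i) \<subseteq> M"
    using cut \<open>i < d\<close> by blast
  have "y \<in> V \<and> hop_dist x y \<le> R + m" if "y \<in> C" for y
  proof -
    have "y \<in> V"
      using reach_in_in[of E "L - M" x y] \<open>y \<in> C\<close> C \<open>L \<subseteq> V\<close> by auto
    have "hop_dist x y \<le> R + T i"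
      using T[of i] diam[OF \<open>i < d\<close>] sep_i cut_i \<open>y \<in> C\<close> C
      by (intro component_in_hop_ball[OF UV[OF \<open>i < d\<close>] \<open>x \<in> U i\<close>]) auto
    then show ?thesis
      using T[of i] \<open>y \<in> V\<close> by simp
  qed
  then have "C \<subseteq> {y \<in> V. hop_dist x y \<le> R + m}"
    by blast
  with finite_card_hop_ball[OF \<open>x \<in> V\<close> deg, of "R + m"] show ?thesis
    by (meson card_mono le_trans)
qed

lemma weighted_hyperfinite_if_asdim_le:
  assumes "bounded_degree V E" and "asdim_le V E d"
  shows "weighted_hyperfinite V E"
  unfolding weighted_hyperfinite_def
proof (intro allI impI)
  fix \<epsilon> :: real
  assume "0 < \<epsilon>"
  then obtain m :: nat where "real d < real m * \<epsilon>"
    using ex_less_of_nat_mult by blast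
  with \<open>0 < \<epsilon>\<close> have "0 < m"
    by (cases m) auto
  obtain \<Delta> where deg: "\<forall>v\<in>V. finite {y. E v y} \<and> card {y. E v y} \<le> \<Delta>"
    using assms(1) unfolding bounded_degree_def by blast
  obtain R U where cover: "asdim_cover d (2 * m) R U"
    using asdim_le_imp_asdim_cover[OF assms(2), of "2 * m"] \<open>0 < m\<close> by auto
  show "\<exists>K>0. \<forall>L w. finite L \<and> L \<subseteq> V \<and> (\<forall>x\<in>L. 0 \<le> w x) \<longrightarrow>
    (\<exists>M\<subseteq>L. sum w M \<le> \<epsilon> * sum w L \<and> (\<forall>C\<in>components E (L - M). real (card C) \<le> K))"
  proof (intro exI[of _ "real ((\<Delta> + 1) ^ (R + m))"] conjI allI impI)
    fix L and w :: "'a \<Rightarrow> real"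
    assume "finite L \<and> L \<subseteq> V \<and> (\<forall>x\<in>L. 0 \<le> w x)"
    then have "finite L" "L \<subseteq> V" and nonneg: "\<And>x. x \<in> L \<Longrightarrow> 0 \<le> w x"
      by auto
    obtain T where T: "\<And>i. T i \<in> {1..m}"
      and light: "sum w (L \<inter> (\<Union>i<d. set_sphere (U i) (T i))) \<le> d * sum w L / m"
      using light_choice_from_disjoint_families[where A = "\<lambda>i. set_sphere (U i)" and d = d and w = w,
            OF \<open>finite L\<close> nonneg \<open>0 < m\<close> set_sphere_disjoint] by blast
    define M where "M = L \<inter> (\<Union>i<d. set_sphere (U i) (T i))"
    have "real d * sum w L \<le> (real m * \<epsilon>) * sum w L"
      using \<open>real d < real m * \<epsilon>\<close> sum_nonneg[of L w] nonneg by (intro mult_right_mono) auto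
    then have "d * sum w L / m \<le> \<epsilon> * sum w L"
      using \<open>0 < m\<close> by (simp add: divide_le_eq mult.commute mult.left_commute)
    with light have "sum w M \<le> \<epsilon> * sum w L"
      unfolding M_def by linarith
    moreover have "real (card C) \<le> real ((\<Delta> + 1) ^ (R + m))"
      if "C \<in> components E (L - M)" for C
    proof -
      have "L \<inter> (\<Union>i<d. set_sphere (U i) (T i)) \<subseteq> M"
        unfolding M_def by (rule order_refl)
      from card_component_after_cut[where T = T, OF cover deg T \<open>L \<subseteq> V\<close> this that]
      show ?thesis
        by (simp only: of_nat_le_iff)
    qed
    moreover have "M \<subseteq> L"
      unfolding M_def by blast
    ultimately show "\<exists>M\<subseteq>L. sum w M \<le> \<epsilon> * sum w L \<and>
      (\<forall>C\<in>components E (L - M). real (card C) \<le> real ((\<Delta> + 1) ^ (R + m)))"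
      by (intro exI[of _ M]) blast
  qed simp
qed

end

theorem mainTheorem6:
  fixes V :: "'a set" and E :: "'a \<Rightarrow> 'a \<Rightarrow> bool"
  assumes "graph V E" and "connected_graph V E" and "infinite V"
    and "bounded_degree V E" and "finite_asdim V E"
  shows "weighted_hyperfinite V E"
proof -
  interpret connected_sgraph V E
    using assms(1,2) by unfold_locales
  obtain d where "asdim_le V E d"
    using assms(5) unfolding finite_asdim_def by blast
  then show ?thesis
    using weighted_hyperfinite_if_asdim_le assms(4) by blast
qed

end
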